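(* Let $R$ be a commutative Noetherian local ring with total quotient ring $Q$ (the localization at the set $S$ of nonzerodivisors), and let $M$ be a finitely generated $R$-module of constant rank $n$ such that $E=\operatorname{End}_R(M)$ is an $R^*$-algebra. Identifying $E_S\cong \operatorname{End}_Q(M_S)\cong M_n(Q)$ (via a $Q$-basis of the free $Q$-module $M_S$), the induced $Q^*$-algebra structure on $E_S$ has the form $A^*=C^{-1}A^TC$ for some invertible $C\in M_n(Q)$ and $a\in Q$ with $C^T=aC$, $a^2=1$; write $a=r/s$ with $r,s$ nonzerodivisors of $R$. Then the $R$-submodule $T=\langle s\,x\otimes y - r\,y\otimes x \mid x,y\in M\rangle$ of $M_*\otimes_E M$ is a torsion $R$-module (i.e. $T\otimes_R Q=0$).
   Context: An $R$-algebra $E$ (possibly noncommutative) is an $R^*$-algebra if there is a map of abelian groups $(-)^*:E\to E$ with $(ab)^*=b^*a^*$, $1_E^*=1_E$, $(ra)^*=ra^*$ for $r\in R$, and $a^{**}=a$ for all $a,b\in E$. $M$ is a left $E$-module via $f\cdot x=f(x)$, and $M_*$ denotes $M$ regarded as a right $E$-module via $x\cdot f=f^*(x)$. $M$ has constant rank $n$ if $M\otimes_R Q$ is a free $Q$-module of rank $n$. The $Q^*$-structure on $E_S$ is $(f/u)^*=f^*/u$. *)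

theory Defs
  imports "HOL-Analysis.Analysis" "HOL-Library.Poly_Mapping"
begin

definition nzd :: "'r::comm_ring_1 \<Rightarrow> bool" where
  "nzd s \<longleftrightarrow> (\<forall>x. s * x = 0 \<longrightarrow> x = 0)"

definition is_ideal :: "'r::comm_ring_1 set \<Rightarrow> bool" where
  "is_ideal I \<longleftrightarrow> 0 \<in> I \<and> (\<forall>x\<in>I. \<forall>y\<in>I. x + y \<in> I) \<and> (\<forall>x\<in>I. \<forall>c. c * x \<in> I)"

definition ideal_gen :: "'r::comm_ring_1 set \<Rightarrow> 'r set" where
  "ideal_gen F = {y. \<exists>c. y = (\<Sum>f\<in>F. c f * f)}"

definition noetherian_ring :: "'r::comm_ring_1 itself \<Rightarrow> bool" where
  "noetherian_ring _ \<longleftrightarrow> (\<forall>I::'r set. is_ideal I \<longrightarrow> (\<exists>F. finite F \<and> I = ideal_gen F))"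

definition maximal_ideal :: "'r::comm_ring_1 set \<Rightarrow> bool" where
  "maximal_ideal I \<longleftrightarrow> is_ideal I \<and> I \<noteq> UNIV \<and>
     (\<forall>J. is_ideal J \<and> I \<subseteq> J \<and> J \<noteq> UNIV \<longrightarrow> J = I)"

definition local_ring :: "'r::comm_ring_1 itself \<Rightarrow> bool" where
  "local_ring _ \<longleftrightarrow> (\<exists>!I::'r set. maximal_ideal I)"

text \<open>\<open>\<iota> : R \<rightarrow> Q\<close> exhibits \<open>Q\<close> as the localization of \<open>R\<close> at the set of
  nonzerodivisors (total quotient ring), via the usual universal characterization.\<close>
definition is_total_quotient_ring :: "('r::comm_ring_1 \<Rightarrow> 'q::comm_ring_1) \<Rightarrow> bool" where
  "is_total_quotient_ring \<iota> \<longleftrightarrow>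
     \<iota> 1 = 1 \<and> (\<forall>x y. \<iota> (x + y) = \<iota> x + \<iota> y) \<and> (\<forall>x y. \<iota> (x * y) = \<iota> x * \<iota> y) \<and>
     (\<forall>s. nzd s \<longrightarrow> (\<exists>q. \<iota> s * q = 1)) \<and>
     (\<forall>q. \<exists>x s. nzd s \<and> q * \<iota> s = \<iota> x) \<and>
     (\<forall>x. \<iota> x = 0 \<longrightarrow> (\<exists>s. nzd s \<and> s * x = 0))"

definition fin_gen_module :: "('r::comm_ring_1 \<Rightarrow> 'm::ab_group_add \<Rightarrow> 'm) \<Rightarrow> bool" where
  "fin_gen_module sc \<longleftrightarrow> module sc \<and> (\<exists>B. finite B \<and> module.span sc B = UNIV)"

text \<open>\<open>j : M \<rightarrow> V\<close> exhibits the \<open>Q\<close>-module \<open>V\<close> (scalar action \<open>scQ\<close>) as the localization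
  \<open>M_S \<cong> M \<otimes>\<^sub>R Q\<close>, where \<open>\<iota> : R \<rightarrow> Q\<close> is the localization map.\<close>
definition is_localized_module ::
  "('r::comm_ring_1 \<Rightarrow> 'q::comm_ring_1) \<Rightarrow> ('r \<Rightarrow> 'm::ab_group_add \<Rightarrow> 'm) \<Rightarrow>
   ('q \<Rightarrow> 'v::ab_group_add \<Rightarrow> 'v) \<Rightarrow> ('m \<Rightarrow> 'v) \<Rightarrow> bool" where
  "is_localized_module \<iota> sc scQ j \<longleftrightarrow>
     module scQ \<and> (\<forall>x y. j (x + y) = j x + j y) \<and> (\<forall>c x. j (sc c x) = scQ (\<iota> c) (j x)) \<and>
     (\<forall>v. \<exists>m s. nzd s \<and> scQ (\<iota> s) v = j m) \<and>
     (\<forall>m. j m = 0 \<longrightarrow> (\<exists>s. nzd s \<and> sc s m = 0))"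

definition End_R :: "('r::comm_ring_1 \<Rightarrow> 'm::ab_group_add \<Rightarrow> 'm) \<Rightarrow> ('m \<Rightarrow> 'm) set" where
  "End_R sc = {f. module_hom sc sc f}"

text \<open>\<open>E\<close> is an \<open>R\<^sup>*\<close>-algebra via \<open>star\<close> (multiplication in \<open>E\<close> is composition).\<close>
definition R_star_algebra :: "('r::comm_ring_1 \<Rightarrow> 'm::ab_group_add \<Rightarrow> 'm) \<Rightarrow> (('m \<Rightarrow> 'm) \<Rightarrow> ('m \<Rightarrow> 'm)) \<Rightarrow> bool" where
  "R_star_algebra sc star \<longleftrightarrow>
     (\<forall>f\<in>End_R sc. star f \<in> End_R sc) \<and>
     (\<forall>f\<in>End_R sc. \<forall>g\<in>End_R sc. star (\<lambda>x. f x + g x) = (\<lambda>x. star f x + star g x)) \<and>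
     (\<forall>f\<in>End_R sc. \<forall>g\<in>End_R sc. star (f \<circ> g) = star g \<circ> star f) \<and>
     star id = id \<and>
     (\<forall>c. \<forall>f\<in>End_R sc. star (\<lambda>x. sc c (f x)) = (\<lambda>x. sc c (star f x))) \<and>
     (\<forall>f\<in>End_R sc. star (star f) = f)"

text \<open>\<open>A\<close> is the matrix of (the localization of) \<open>f\<close> with respect to the \<open>Q\<close>-basis \<open>b\<close> of \<open>M_S\<close>:
  \<open>f\<^sub>S(\<Sum>\<^sub>k x\<^sub>k b\<^sub>k) = \<Sum>\<^sub>i (A x)\<^sub>i b\<^sub>i\<close>.\<close>
definition mat_rep ::
  "('q::comm_ring_1 \<Rightarrow> 'v::ab_group_add \<Rightarrow> 'v) \<Rightarrow> ('m \<Rightarrow> 'v) \<Rightarrow> ('n::finite \<Rightarrow> 'v) \<Rightarrow>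
   ('m \<Rightarrow> 'm) \<Rightarrow> 'q^'n^'n \<Rightarrow> bool" where
  "mat_rep scQ j b f A \<longleftrightarrow>
     (\<forall>m (x::'q^'n). j m = (\<Sum>k\<in>UNIV. scQ (x$k) (b k)) \<longrightarrow>
        j (f m) = (\<Sum>i\<in>UNIV. scQ ((A *v x)$i) (b i)))"

text \<open>Presented as the free abelian group on \<open>M \<times> M\<close> modulo the subgroup \<open>tensor_rel\<close>.\<close>

definition tgen :: "'m \<Rightarrow> 'm \<Rightarrow> ('m \<times> 'm) \<Rightarrow>\<^sub>0 int" where
  "tgen x y = Poly_Mapping.single (x, y) 1"

inductive_set tensor_rel for sc :: "'r::comm_ring_1 \<Rightarrow> 'm::ab_group_add \<Rightarrow> 'm"
  and star :: "('m \<Rightarrow> 'm) \<Rightarrow> ('m \<Rightarrow> 'm)" where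
  rel_zero: "0 \<in> tensor_rel sc star"
| rel_add: "z \<in> tensor_rel sc star \<Longrightarrow> w \<in> tensor_rel sc star \<Longrightarrow> z + w \<in> tensor_rel sc star"
| rel_uminus: "z \<in> tensor_rel sc star \<Longrightarrow> - z \<in> tensor_rel sc star"
| rel_addl: "tgen (x + x') y - tgen x y - tgen x' y \<in> tensor_rel sc star"
| rel_addr: "tgen x (y + y') - tgen x y - tgen x y' \<in> tensor_rel sc star"
| rel_bal: "f \<in> End_R sc \<Longrightarrow> tgen (star f x) y - tgen x (f y) \<in> tensor_rel sc star"

text \<open>\<open>R\<close>-module structure (acting on the left factor: \<open>c(x\<otimes>y) = (cx)\<otimes>y\<close>).\<close>
definition tsmul :: "('r \<Rightarrow> 'm \<Rightarrow> 'm) \<Rightarrow> 'r \<Rightarrow> (('m \<times> 'm) \<Rightarrow>\<^sub>0 int) \<Rightarrow> (('m \<times> 'm) \<Rightarrow>\<^sub>0 int)" where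
  "tsmul sc c z = (\<Sum>p\<in>Poly_Mapping.keys z. Poly_Mapping.single (sc c (fst p), snd p) (Poly_Mapping.lookup z p))"

text \<open>Preimage in the free group of the \<open>R\<close>-submodule
  \<open>T = \<langle>s x\<otimes>y - r y\<otimes>x\<rangle>\<close> of \<open>M\<^sub>* \<otimes>\<^sub>E M\<close>.\<close>
inductive_set T_lift for sc :: "'r::comm_ring_1 \<Rightarrow> 'm::ab_group_add \<Rightarrow> 'm"
  and star :: "('m \<Rightarrow> 'm) \<Rightarrow> ('m \<Rightarrow> 'm)" and r :: 'r and s :: 'r where
  T_rel: "z \<in> tensor_rel sc star \<Longrightarrow> z \<in> T_lift sc star r s"
| T_gen: "tgen (sc s x) y - tgen (sc r y) x \<in> T_lift sc star r s"
| T_add: "z \<in> T_lift sc star r s \<Longrightarrow> w \<in> T_lift sc star r s \<Longrightarrow> z + w \<in> T_lift sc star r s"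
| T_uminus: "z \<in> T_lift sc star r s \<Longrightarrow> - z \<in> T_lift sc star r s"
| T_smul: "z \<in> T_lift sc star r s \<Longrightarrow> tsmul sc c z \<in> T_lift sc star r s"

text \<open>\<open>T\<close> is torsion: every element of \<open>T\<close> is killed by a nonzerodivisor
  (equivalently \<open>T \<otimes>\<^sub>R Q = 0\<close>).\<close>
definition T_torsion :: "('r::comm_ring_1 \<Rightarrow> 'm::ab_group_add \<Rightarrow> 'm) \<Rightarrow> (('m \<Rightarrow> 'm) \<Rightarrow> ('m \<Rightarrow> 'm)) \<Rightarrow> 'r \<Rightarrow> 'r \<Rightarrow> bool" where
  "T_torsion sc star r s \<longleftrightarrow>
     (\<forall>z\<in>T_lift sc star r s. \<exists>t. nzd t \<and> tsmul sc t z \<in> tensor_rel sc star)"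

end

theory Submission
  imports Defs
begin

text \<open>Fix a coordinate of \<open>M\<^sub>S \<cong> Q\<^sup>n\<close> and clear its denominators on the generators of \<open>M\<close>:
  this gives an \<open>R\<close>-linear \<open>\<phi> : M \<rightarrow> R\<close> taking a nonzerodivisor value \<open>\<phi>(m\<^sub>0)\<close>. The rank-one
  endomorphisms \<open>f\<^sub>y = \<phi>(-) y\<close> have a single nonzero column, so by \<open>A\<^sup>* = C\<^sup>-\<^sup>1A\<^sup>TC\<close>,
  \<open>C\<^sup>T = aC\<close> and \<open>r = as\<close> the elements \<open>f\<^sub>y\<^sup>*(sx)\<close> and \<open>f\<^sub>x\<^sup>*(ry)\<close> agree in \<open>M\<^sub>S\<close>, hence are
  identified by some nonzerodivisor \<open>t\<close> in \<open>M\<close>. Balancing gives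
  \<open>\<phi>(m\<^sub>0) (sx \<otimes> y) = sx \<otimes> f\<^sub>y(m\<^sub>0) = f\<^sub>y\<^sup>*(sx) \<otimes> m\<^sub>0\<close>, and likewise for \<open>ry \<otimes> x\<close>, so \<open>t \<phi>(m\<^sub>0)\<close>
  kills every generator of \<open>T\<close>.\<close>

lemma nzd_one: "nzd 1"
  by (simp add: nzd_def)

lemma nzd_mult: "nzd a \<Longrightarrow> nzd b \<Longrightarrow> nzd (a * b)"
  unfolding nzd_def by (metis mult.assoc)

lemma nzd_prod: "(\<And>x. x \<in> A \<Longrightarrow> nzd (f x)) \<Longrightarrow> nzd (prod f A)"
  by (induct A rule: infinite_finite_induct) (simp_all add: nzd_one nzd_mult)

lemma total_quotient_ring_hom:
  assumes "is_total_quotient_ring \<iota>"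
  shows "\<iota> 0 = 0" and "\<iota> (x + y) = \<iota> x + \<iota> y" and "\<iota> (x * y) = \<iota> x * \<iota> y"
proof -
  show add: "\<iota> (x + y) = \<iota> x + \<iota> y" for x y
    using assms unfolding is_total_quotient_ring_def by blast
  show "\<iota> (x * y) = \<iota> x * \<iota> y"
    using assms unfolding is_total_quotient_ring_def by blast
  show "\<iota> 0 = 0"
    using add[of 0 0] by simp
qed

lemma total_quotient_ring_inj:
  assumes "is_total_quotient_ring \<iota>"
  shows "inj \<iota>"
proof (rule injI)
  fix x y
  assume "\<iota> x = \<iota> y"
  moreover have "\<iota> (x - y) + \<iota> y = \<iota> x"
    by (metis assms total_quotient_ring_hom(2) diff_add_cancel)
  ultimately have "\<iota> (x - y) = 0" by simp
  then obtain t where "nzd t" "t * (x - y) = 0"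
    using assms unfolding is_total_quotient_ring_def by blast
  then have "x - y = 0" unfolding nzd_def by blast
  then show "x = y" by simp
qed

text \<open>The common denominator is the product of the denominators of the values on the generators.\<close>
lemma linear_to_total_quotient_common_denominator:
  fixes c :: "'m::ab_group_add \<Rightarrow> 'q::comm_ring_1" and \<iota> :: "'r::comm_ring_1 \<Rightarrow> 'q"
  assumes Q: "is_total_quotient_ring \<iota>" and M: "fin_gen_module sc"
    and add: "\<And>m m'. c (m + m') = c m + c m'" and scale: "\<And>k m. c (sc k m) = \<iota> k * c m"
  obtains u where "nzd u" "\<And>m. \<exists>d. \<iota> d = \<iota> u * c m"
proof -
  obtain B where B: "finite B" "module.span sc B = UNIV" and modM: "module sc"
    using M unfolding fin_gen_module_def by blast
  note \<iota>_hom = total_quotient_ring_hom[OF Q]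
  have "\<forall>g. \<exists>x s. nzd s \<and> c g * \<iota> s = \<iota> x"
    using Q unfolding is_total_quotient_ring_def by blast
  then obtain num den where den: "\<And>g. nzd (den g)" and num: "\<And>g. c g * \<iota> (den g) = \<iota> (num g)"
    by metis
  define u where "u = prod den B"
  have "\<exists>d. \<iota> d = \<iota> u * c m" if "m \<in> module.span sc B" for m
    using that
  proof (induction m rule: module.span_induct_alt[OF modM, consumes 1, case_names base step])
    case base
    show ?case using \<iota>_hom(1) add[of 0 0] by (intro exI[of _ 0]) simp
  next
    case (step k g m)
    then obtain d where d: "\<iota> d = \<iota> u * c m" by blast
    have "u = den g * prod den (B - {g})"
      unfolding u_def using B(1) step(1) by (rule prod.remove)
    then have "\<iota> u * c g = \<iota> (num g * prod den (B - {g}))"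
      by (simp add: \<iota>_hom(3) num[symmetric] ac_simps)
    then have "\<iota> (k * (num g * prod den (B - {g})) + d) = \<iota> u * c (sc k g + m)"
      by (simp add: \<iota>_hom d add scale algebra_simps)
    then show ?case by blast
  qed
  then have "\<exists>d. \<iota> d = \<iota> u * c m" for m
    using B(2) by blast
  moreover have "nzd u"
    unfolding u_def by (rule nzd_prod) (rule den)
  ultimately show thesis
    using that by blast
qed

lemma linear_functional_lift:
  fixes c :: "'m::ab_group_add \<Rightarrow> 'q::comm_ring_1" and \<iota> :: "'r::comm_ring_1 \<Rightarrow> 'q"
  assumes Q: "is_total_quotient_ring \<iota>" and M: "fin_gen_module sc"
    and add: "\<And>m m'. c (m + m') = c m + c m'" and scale: "\<And>k m. c (sc k m) = \<iota> k * c m"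
  obtains u \<phi> where "nzd u" and "\<And>m. \<iota> (\<phi> m) = \<iota> u * c m"
    and "\<And>m m'. \<phi> (m + m') = \<phi> m + \<phi> m'" and "\<And>k m. \<phi> (sc k m) = k * \<phi> m"
proof -
  obtain u where u: "nzd u" and ex: "\<And>m. \<exists>d. \<iota> d = \<iota> u * c m"
    using linear_to_total_quotient_common_denominator[OF Q M add scale] by blast
  define \<phi> where "\<phi> m = (SOME d. \<iota> d = \<iota> u * c m)" for m
  have \<phi>: "\<iota> (\<phi> m) = \<iota> u * c m" for m
    unfolding \<phi>_def using ex by (rule someI_ex)
  note \<iota>_inj = injD[OF total_quotient_ring_inj[OF Q]] and \<iota>_hom = total_quotient_ring_hom[OF Q]
  show thesis
  proof (rule that[OF u \<phi>])
    show "\<phi> (m + m') = \<phi> m + \<phi> m'" for m m'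
      by (rule \<iota>_inj) (simp add: \<iota>_hom \<phi> add algebra_simps)
    show "\<phi> (sc k m) = k * \<phi> m" for k m
      by (rule \<iota>_inj) (simp add: \<iota>_hom \<phi> scale algebra_simps)
  qed
qed

locale module_basis =
  fixes scale :: "'a::comm_ring_1 \<Rightarrow> 'v::ab_group_add \<Rightarrow> 'v" and b :: "'n::finite \<Rightarrow> 'v"
  assumes module: "module scale" and inj_basis: "inj b"
    and independent_basis: "module.independent scale (range b)"
    and span_basis: "module.span scale (range b) = UNIV"
begin

lemma sum_basis_eq_iff:
  "(\<Sum>k\<in>UNIV. scale (x$k) (b k)) = (\<Sum>k\<in>UNIV. scale (y$k) (b k)) \<longleftrightarrow> x = y"
proof
  assume eq: "(\<Sum>k\<in>UNIV. scale (x$k) (b k)) = (\<Sum>k\<in>UNIV. scale (y$k) (b k))"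
  define g where "g v = x $ inv b v - y $ inv b v" for v
  have "(\<Sum>v\<in>range b. scale (g v) v) = (\<Sum>k\<in>UNIV. scale (x$k) (b k) - scale (y$k) (b k))"
    by (simp add: sum.reindex inj_basis g_def module.scale_left_diff_distrib[OF module])
  also have "\<dots> = 0"
    by (simp add: sum_subtractf eq)
  finally have "g (b k) = 0" for k
    by (intro module.independentD[OF module independent_basis]) auto
  then show "x = y"
    by (simp add: g_def inj_basis vec_eq_iff)
qed simp

lemma ex_sum_basis: "\<exists>x. v = (\<Sum>k\<in>UNIV. scale (x$k) (b k))"
proof -
  obtain c where "v = (\<Sum>w\<in>range b. scale (c w) w)"
    using span_basis module.span_finite[OF module, of "range b"] by auto
  also have "\<dots> = (\<Sum>k\<in>UNIV. scale ((\<chi> k. c (b k))$k) (b k))"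
    by (simp add: sum.reindex inj_basis)
  finally show ?thesis ..
qed

definition coords :: "'v \<Rightarrow> 'a^'n" where
  "coords v = (THE x. v = (\<Sum>k\<in>UNIV. scale (x$k) (b k)))"

lemma coords_eqI: "v = (\<Sum>k\<in>UNIV. scale (x$k) (b k)) \<Longrightarrow> coords v = x"
  unfolding coords_def by (rule the_equality) (auto simp: sum_basis_eq_iff)

lemma sum_coords: "(\<Sum>k\<in>UNIV. scale (coords v $ k) (b k)) = v"
  using ex_sum_basis[of v] coords_eqI by metis

lemma coords_eq_iff: "coords v = coords w \<longleftrightarrow> v = w"
  by (metis sum_coords)

lemma coords_add: "coords (v + w) = coords v + coords w"
  by (rule coords_eqI)
     (simp add: module.scale_left_distrib[OF module] sum.distrib sum_coords)

lemma coords_scale: "coords (scale q v) = q *s coords v"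
proof (rule coords_eqI)
  have "scale q v = scale q (\<Sum>k\<in>UNIV. scale (coords v $ k) (b k))"
    by (simp only: sum_coords)
  then show "scale q v = (\<Sum>k\<in>UNIV. scale ((q *s coords v) $ k) (b k))"
    by (simp add: module.scale_sum_right[OF module] module.scale_scale[OF module])
qed

lemma coords_basis: "coords (b k) = axis k 1"
proof (rule coords_eqI)
  have "scale (axis k 1 $ l) (b l) = (if l = k then b l else 0)" for l
    by (simp add: axis_def module.scale_zero_left[OF module] module.scale_one[OF module])
  then show "b k = (\<Sum>l\<in>UNIV. scale (axis k 1 $ l) (b l))"
    by simp
qed

lemma mat_rep_iff: "mat_rep scale j b f A \<longleftrightarrow> (\<forall>m. coords (j (f m)) = A *v coords (j m))"
  unfolding mat_rep_def by (metis coords_eqI sum_coords)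

end

definition column_matrix :: "'a::zero^'n \<Rightarrow> 'n \<Rightarrow> 'a^'n^'n" where
  "column_matrix y k = (\<chi> i l. if l = k then y$i else 0)"

definition matrix_form :: "'a::semiring_1^'n^'n \<Rightarrow> 'a^'n \<Rightarrow> 'a^'n \<Rightarrow> 'a" where
  "matrix_form C x y = (\<Sum>i\<in>UNIV. x$i * (C *v y)$i)"

lemma column_matrix_mult: "column_matrix y k *v x = (x$k) *s (y :: 'a::comm_semiring_1^'n)"
  by (simp add: vec_eq_iff column_matrix_def matrix_vector_mult_def mult.commute if_distrib[of "times _"]
      cong: if_cong)

lemma transpose_column_matrix_mult:
  "(transpose (column_matrix y k) ** C) *v x = matrix_form C y x *s axis k (1::'a::comm_semiring_1)"
  by (simp add: vec_eq_iff matrix_vector_mul_assoc[symmetric] vector_matrix_mult_def matrix_form_def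
      column_matrix_def axis_def if_distrib[of "times _"] mult.commute cong: if_cong)

lemma matrix_form_scale_left: "matrix_form C (c *s x) y = c * matrix_form C x y"
  by (simp add: matrix_form_def sum_distrib_left mult.assoc)

lemma matrix_form_scale_right:
  "matrix_form C x (c *s y) = (c :: 'a::comm_semiring_1) * matrix_form C x y"
  by (simp add: matrix_form_def matrix_vector_mult_def sum_distrib_left mult_ac)

lemma matrix_form_commute:
  fixes C :: "'a::comm_semiring_1^'n^'n"
  assumes "transpose C = (\<chi> i k. a * C$i$k)"
  shows "matrix_form C x y = a * matrix_form C y x"
proof -
  have C: "C$l$i = a * C$i$l" for i l
    using arg_cong[OF assms, of "\<lambda>D. D$i$l"] by (simp add: transpose_def)
  have "matrix_form C x y = (\<Sum>i\<in>UNIV. \<Sum>l\<in>UNIV. x$i * C$i$l * y$l)"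
    by (simp add: matrix_form_def matrix_vector_mult_def sum_distrib_left mult.assoc)
  also have "\<dots> = (\<Sum>l\<in>UNIV. \<Sum>i\<in>UNIV. a * (y$l * C$l$i * x$i))"
    by (subst sum.swap, intro sum.cong refl, subst C) (simp add: mult_ac)
  also have "\<dots> = a * matrix_form C y x"
    by (simp add: matrix_form_def matrix_vector_mult_def sum_distrib_left mult.assoc)
  finally show ?thesis .
qed

text \<open>The rank-one map \<open>A = c y e\<^sub>k\<^sup>T\<close> enters \<open>DA\<^sup>TC\<close> only through the form \<open>y\<^sup>TCx\<close>, and
  \<open>C\<^sup>T = aC\<close> with \<open>r = as\<close> gives \<open>s y\<^sup>TCx = r x\<^sup>TCy\<close>.\<close>
lemma transpose_column_matrix_swap:
  fixes C :: "'a::comm_ring_1^'n^'n"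
  assumes "transpose C = (\<chi> i k. a * C$i$k)" and "a * a = 1" and "r = a * s"
  shows "(D ** transpose (column_matrix (c *s y) k) ** C) *v (s *s x)
       = (D ** transpose (column_matrix (c *s x) k) ** C) *v (r *s y)"
proof -
  have assoc: "(D ** transpose M ** C) *v v = D *v ((transpose M ** C) *v v)" for M v
    by (metis matrix_mul_assoc matrix_vector_mul_assoc)
  have "c * s * matrix_form C y x = c * s * (a * a) * matrix_form C y x"
    using assms(2) by simp
  also have "\<dots> = c * r * matrix_form C x y"
    using matrix_form_commute[OF assms(1), of x y] assms(3) by (simp add: mult_ac)
  finally show ?thesis
    unfolding assoc transpose_column_matrix_mult matrix_form_scale_left matrix_form_scale_right
    by (simp add: mult_ac)
qed

lemma tsmul_eq_sum_superset:
  assumes "finite K" "Poly_Mapping.keys z \<subseteq> K"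
  shows "tsmul sc c z = (\<Sum>p\<in>K. Poly_Mapping.single (sc c (fst p), snd p) (Poly_Mapping.lookup z p))"
  unfolding tsmul_def by (rule sum.mono_neutral_left[OF assms]) (simp add: in_keys_iff)

lemma tsmul_add: "tsmul sc c (z + w) = tsmul sc c z + tsmul sc c w"
proof -
  let ?K = "Poly_Mapping.keys z \<union> Poly_Mapping.keys w"
  have K: "finite ?K" "Poly_Mapping.keys (z + w) \<subseteq> ?K"
    by (simp_all add: keys_add)
  show ?thesis
    by (simp add: tsmul_eq_sum_superset[OF K] tsmul_eq_sum_superset[OF K(1), of z]
        tsmul_eq_sum_superset[OF K(1), of w] lookup_add single_add sum.distrib)
qed

lemma tsmul_zero: "tsmul sc c 0 = 0"
  by (simp add: tsmul_def)

lemma tsmul_minus: "tsmul sc c (- z) = - tsmul sc c z"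
  using tsmul_add[of sc c "- z" z] by (simp add: tsmul_zero eq_neg_iff_add_eq_0)

lemma tsmul_diff: "tsmul sc c (z - w) = tsmul sc c z - tsmul sc c w"
  using tsmul_add[of sc c z "- w"] by (simp add: tsmul_minus)

lemma tsmul_sum: "tsmul sc c (sum g A) = (\<Sum>x\<in>A. tsmul sc c (g x))"
  by (induct A rule: infinite_finite_induct) (simp_all add: tsmul_zero tsmul_add)

lemma tsmul_single: "tsmul sc c (Poly_Mapping.single (x, y) n) = Poly_Mapping.single (sc c x, y) n"
  by (cases "n = 0") (simp_all add: tsmul_def)

lemma tsmul_tgen: "tsmul sc c (tgen x y) = tgen (sc c x) y"
  by (simp add: tgen_def tsmul_single)

lemma tsmul_tsmul:
  assumes "module sc"
  shows "tsmul sc c (tsmul sc d z) = tsmul sc (c * d) z"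
  unfolding tsmul_def[of sc d] tsmul_sum tsmul_single
  by (simp add: tsmul_def module.scale_scale[OF assms])

lemma tensor_rel_diff:
  "z \<in> tensor_rel sc star \<Longrightarrow> w \<in> tensor_rel sc star \<Longrightarrow> z - w \<in> tensor_rel sc star"
  using tensor_rel.rel_add[OF _ tensor_rel.rel_uminus, of z sc star w] by simp

lemma tsmul_tensor_rel:
  assumes "module sc" "R_star_algebra sc star" "z \<in> tensor_rel sc star"
  shows "tsmul sc c z \<in> tensor_rel sc star"
  using assms(3)
proof induction
  case (rel_bal f x y)
  then have "module_hom sc sc (star f)"
    using assms(2) by (simp add: R_star_algebra_def End_R_def)
  then have "star f (sc c x) = sc c (star f x)"
    by (rule module_hom.scale)
  then show ?case
    by (metis rel_bal tensor_rel.rel_bal tsmul_diff tsmul_tgen)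
qed (simp_all add: tsmul_zero tsmul_add tsmul_minus tsmul_diff tsmul_tgen
      module.scale_right_distrib[OF assms(1)] tensor_rel.intros)

lemma scale_End: "module sc \<Longrightarrow> sc c \<in> End_R sc"
  by (simp add: End_R_def module_hom_def module_hom_axioms_def module.scale_right_distrib
      module.scale_left_commute)

lemma star_scale:
  assumes "module sc" "R_star_algebra sc star"
  shows "star (sc c) = sc c"
proof -
  have "id \<in> End_R sc"
    using assms(1) by (simp add: End_R_def module_hom_def module_hom_axioms_def)
  then have "star (\<lambda>x. sc c (id x)) = (\<lambda>x. sc c (star id x))"
    using assms(2) unfolding R_star_algebra_def by blast
  then show ?thesis
    using assms(2) unfolding R_star_algebra_def by (simp add: id_def)
qed

lemma rank_one_End:
  assumes "module sc"
    and "\<And>m m'. \<phi> (m + m') = \<phi> m + \<phi> m'" and "\<And>c m. \<phi> (sc c m) = c * \<phi> m"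
  shows "(\<lambda>m. sc (\<phi> m) y) \<in> End_R sc"
  using assms by (simp add: End_R_def module_hom_def module_hom_axioms_def
      module.scale_left_distrib module.scale_scale)

text \<open>Both sides equal \<open>x \<otimes> \<phi>(m\<^sub>0) y\<close>: move the scalar \<open>\<phi>(m\<^sub>0)\<close>, resp. the
  endomorphism \<open>m \<mapsto> \<phi>(m) y\<close>, across the tensor sign.\<close>
lemma tgen_scale_rank_one:
  assumes "module sc" "R_star_algebra sc star"
    and "\<And>m m'. \<phi> (m + m') = \<phi> m + \<phi> m'" and "\<And>c m. \<phi> (sc c m) = c * \<phi> m"
  shows "tgen (sc (\<phi> m\<^sub>0) x) y - tgen (star (\<lambda>m. sc (\<phi> m) y) x) m\<^sub>0 \<in> tensor_rel sc star"
proof -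
  have "tgen (star (sc (\<phi> m\<^sub>0)) x) y - tgen x (sc (\<phi> m\<^sub>0) y) \<in> tensor_rel sc star"
    by (rule tensor_rel.rel_bal[OF scale_End[OF assms(1)]])
  moreover have "tgen (star (\<lambda>m. sc (\<phi> m) y) x) m\<^sub>0 - tgen x (sc (\<phi> m\<^sub>0) y) \<in> tensor_rel sc star"
    using tensor_rel.rel_bal[OF rank_one_End[OF assms(1,3,4)]] by simp
  ultimately show ?thesis
    using tensor_rel_diff star_scale[OF assms(1,2)] by fastforce
qed

lemma tgen_swap_torsion:
  assumes M: "module sc" and E: "R_star_algebra sc star"
    and \<phi>: "\<And>m m'. \<phi> (m + m') = \<phi> m + \<phi> m'" "\<And>c m. \<phi> (sc c m) = c * \<phi> m"
    and swap: "sc t (star (\<lambda>m. sc (\<phi> m) y) (sc s x)) = sc t (star (\<lambda>m. sc (\<phi> m) x) (sc r y))"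
  shows "tsmul sc (t * \<phi> m\<^sub>0) (tgen (sc s x) y - tgen (sc r y) x) \<in> tensor_rel sc star"
proof -
  let ?\<alpha> = "star (\<lambda>m. sc (\<phi> m) y) (sc s x)" and ?\<beta> = "star (\<lambda>m. sc (\<phi> m) x) (sc r y)"
  have "tsmul sc (\<phi> m\<^sub>0) (tgen (sc s x) y - tgen (sc r y) x) - (tgen ?\<alpha> m\<^sub>0 - tgen ?\<beta> m\<^sub>0)
      = (tgen (sc (\<phi> m\<^sub>0) (sc s x)) y - tgen ?\<alpha> m\<^sub>0) - (tgen (sc (\<phi> m\<^sub>0) (sc r y)) x - tgen ?\<beta> m\<^sub>0)"
    by (simp add: tsmul_diff tsmul_tgen)
  also have "\<dots> \<in> tensor_rel sc star"
    by (intro tensor_rel_diff tgen_scale_rank_one[OF M E \<phi>])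
  finally have "tsmul sc t (tsmul sc (\<phi> m\<^sub>0) (tgen (sc s x) y - tgen (sc r y) x)
      - (tgen ?\<alpha> m\<^sub>0 - tgen ?\<beta> m\<^sub>0)) \<in> tensor_rel sc star"
    by (rule tsmul_tensor_rel[OF M E])
  then show ?thesis
    by (simp add: tsmul_diff tsmul_tgen swap tsmul_tsmul[OF M] module.scale_scale[OF M] mult.assoc)
qed

lemma T_torsionI:
  assumes M: "module sc" and E: "R_star_algebra sc star"
    and gen: "\<And>x y. \<exists>t. nzd t \<and> tsmul sc t (tgen (sc s x) y - tgen (sc r y) x) \<in> tensor_rel sc star"
  shows "T_torsion sc star r s"
  unfolding T_torsion_def
proof
  fix z
  assume "z \<in> T_lift sc star r s"
  then show "\<exists>t. nzd t \<and> tsmul sc t z \<in> tensor_rel sc star"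
  proof induction
    case (T_rel z)
    then show ?case
      using nzd_one tsmul_tensor_rel[OF M E] by blast
  next
    case (T_gen x y)
    then show ?case by (rule gen)
  next
    case (T_add z w)
    then obtain t u where "nzd t" "tsmul sc t z \<in> tensor_rel sc star"
      and "nzd u" "tsmul sc u w \<in> tensor_rel sc star" by blast
    moreover have "tsmul sc (u * t) (z + w) = tsmul sc u (tsmul sc t z) + tsmul sc t (tsmul sc u w)"
      by (simp add: tsmul_add tsmul_tsmul[OF M] mult.commute)
    ultimately show ?case
      using nzd_mult tensor_rel.rel_add tsmul_tensor_rel[OF M E] by metis
  next
    case (T_uminus z)
    then show ?case
      using tensor_rel.rel_uminus by (fastforce simp: tsmul_minus)
  next
    case (T_smul z c)
    then obtain t where "nzd t" "tsmul sc t z \<in> tensor_rel sc star" by blast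
    moreover have "tsmul sc t (tsmul sc c z) = tsmul sc c (tsmul sc t z)"
      by (simp add: tsmul_tsmul[OF M] mult.commute)
    ultimately show ?case
      using tsmul_tensor_rel[OF M E] by metis
  qed
qed

lemma (in module_basis) exists_nzd_value:
  fixes \<iota> :: "'r::comm_ring_1 \<Rightarrow> 'a"
  assumes Q: "is_total_quotient_ring \<iota>" and MS: "is_localized_module \<iota> sc scale j"
    and \<phi>: "\<And>m. \<iota> (\<phi> m) = \<iota> u * coords (j m) $ k" and u: "nzd u"
  obtains m where "nzd (\<phi> m)"
proof -
  obtain m t where t: "nzd t" "scale (\<iota> t) (b k) = j m"
    using MS unfolding is_localized_module_def by blast
  then have "coords (j m) $ k = \<iota> t"
    by (metis coords_scale coords_basis axis_nth vector_smult_component mult_1_right)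
  then have "\<iota> (\<phi> m) = \<iota> (u * t)"
    by (simp add: \<phi> total_quotient_ring_hom[OF Q])
  then have "\<phi> m = u * t"
    by (rule injD[OF total_quotient_ring_inj[OF Q]])
  then show thesis
    using nzd_mult[OF u t(1)] by (intro that[of m]) simp
qed

lemma (in module_basis) star_rank_one_swap:
  fixes \<iota> :: "'r::comm_ring_1 \<Rightarrow> 'a" and sc :: "'r \<Rightarrow> 'm::ab_group_add \<Rightarrow> 'm"
  assumes MS: "is_localized_module \<iota> sc scale j" and M: "module sc"
    and \<phi>: "\<And>m m'. \<phi> (m + m') = \<phi> m + \<phi> m'" "\<And>c m. \<phi> (sc c m) = c * \<phi> m"
    and \<phi>_coord: "\<And>m. \<iota> (\<phi> m) = \<iota> u * coords (j m) $ k"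
    and star_form: "\<forall>f\<in>End_R sc. \<forall>A. mat_rep scale j b f A \<longrightarrow>
                       mat_rep scale j b (star f) (matrix_inv C ** transpose A ** C)"
    and C_sym: "transpose C = (\<chi> i k. a * C$i$k)" and a_sq: "a * a = 1" and rs: "\<iota> r = a * \<iota> s"
  obtains t where "nzd t"
    and "sc t (star (\<lambda>m. sc (\<phi> m) y) (sc s x)) = sc t (star (\<lambda>m. sc (\<phi> m) x) (sc r y))"
proof -
  let ?A = "\<lambda>y. column_matrix (\<iota> u *s coords (j y)) k"
  let ?\<alpha> = "star (\<lambda>m. sc (\<phi> m) y) (sc s x)" and ?\<beta> = "star (\<lambda>m. sc (\<phi> m) x) (sc r y)"
  have j_add: "j (v + w) = j v + j w" and j_scale: "j (sc c v) = scale (\<iota> c) (j v)" for v w c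
    using MS unfolding is_localized_module_def by blast+
  have "mat_rep scale j b (\<lambda>m. sc (\<phi> m) y) (?A y)" for y
    by (simp add: mat_rep_iff j_scale coords_scale \<phi>_coord column_matrix_mult mult.commute)
  then have "mat_rep scale j b (star (\<lambda>m. sc (\<phi> m) y)) (matrix_inv C ** transpose (?A y) ** C)" for y
    using star_form rank_one_End[OF M \<phi>] by blast
  then have star_coords: "coords (j (star (\<lambda>m. sc (\<phi> m) y) v))
      = (matrix_inv C ** transpose (?A y) ** C) *v coords (j v)" for y v
    unfolding mat_rep_iff by blast
  have "coords (j ?\<alpha>) = (matrix_inv C ** transpose (?A y) ** C) *v (\<iota> s *s coords (j x))"
    by (simp only: star_coords j_scale coords_scale)
  also have "\<dots> = (matrix_inv C ** transpose (?A x) ** C) *v (\<iota> r *s coords (j y))"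
    by (rule transpose_column_matrix_swap[OF C_sym a_sq rs])
  also have "\<dots> = coords (j ?\<beta>)"
    by (simp only: star_coords j_scale coords_scale)
  finally have "j (?\<alpha> - ?\<beta>) = 0"
    using j_add[of "?\<alpha> - ?\<beta>" ?\<beta>] by (simp add: coords_eq_iff)
  then obtain t where t: "nzd t" "sc t (?\<alpha> - ?\<beta>) = 0"
    using MS unfolding is_localized_module_def by blast
  show thesis
  proof (rule that[OF t(1)])
    show "sc t ?\<alpha> = sc t ?\<beta>"
      using t(2) by (simp add: module.scale_right_diff_distrib[OF M])
  qed
qed

theorem lemma3p3:
  fixes sc :: "'r::comm_ring_1 \<Rightarrow> 'm::ab_group_add \<Rightarrow> 'm"
    and \<iota> :: "'r \<Rightarrow> 'q::comm_ring_1"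
    and scQ :: "'q \<Rightarrow> 'v::ab_group_add \<Rightarrow> 'v"
    and j :: "'m \<Rightarrow> 'v"
    and b :: "'n::finite \<Rightarrow> 'v"
    and star :: "('m \<Rightarrow> 'm) \<Rightarrow> ('m \<Rightarrow> 'm)"
    and C :: "'q^'n^'n" and a :: 'q and r s :: 'r
  assumes noeth: "noetherian_ring TYPE('r)"
    and loc: "local_ring TYPE('r)"
    and Q: "is_total_quotient_ring \<iota>"
    and M: "fin_gen_module sc"
    and MS: "is_localized_module \<iota> sc scQ j"
    and basis: "inj b" "module.independent scQ (range b)" "module.span scQ (range b) = UNIV"
    and E: "R_star_algebra sc star"
    and C_inv: "invertible C"
    and star_form: "\<forall>f\<in>End_R sc. \<forall>A. mat_rep scQ j b f A \<longrightarrow>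
                       mat_rep scQ j b (star f) (matrix_inv C ** transpose A ** C)"
    and C_sym: "transpose C = (\<chi> i k. a * C$i$k)"
    and a_sq: "a * a = 1"
    and rs: "nzd r" "nzd s" "\<iota> r = a * \<iota> s"
  shows "T_torsion sc star r s"
proof -
  interpret module_basis scQ b
    by (rule module_basis.intro) (use MS basis in \<open>simp_all add: is_localized_module_def\<close>)
  have M': "module sc"
    using M by (simp add: fin_gen_module_def)
  obtain k :: 'n where True by simp
  have coord_add: "coords (j (m + m')) $ k = coords (j m) $ k + coords (j m') $ k"
    and coord_scale: "coords (j (sc c m)) $ k = \<iota> c * coords (j m) $ k" for m m' c
    using MS by (simp_all add: is_localized_module_def coords_add coords_scale)
  obtain u \<phi> where u: "nzd u" and \<phi>_coord: "\<And>m. \<iota> (\<phi> m) = \<iota> u * coords (j m) $ k"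
    and \<phi>: "\<And>m m'. \<phi> (m + m') = \<phi> m + \<phi> m'" "\<And>c m. \<phi> (sc c m) = c * \<phi> m"
    using linear_functional_lift[OF Q M, where c = "\<lambda>m. coords (j m) $ k", OF coord_add coord_scale]
    by blast
  obtain m\<^sub>0 where m\<^sub>0: "nzd (\<phi> m\<^sub>0)"
    by (rule exists_nzd_value[OF Q MS \<phi>_coord u])
  show ?thesis
  proof (rule T_torsionI[OF M' E])
    fix x y
    obtain t where "nzd t"
      and "sc t (star (\<lambda>m. sc (\<phi> m) y) (sc s x)) = sc t (star (\<lambda>m. sc (\<phi> m) x) (sc r y))"
      by (rule star_rank_one_swap[OF MS M' \<phi> \<phi>_coord star_form C_sym a_sq rs(3)])
    then show "\<exists>t. nzd t \<and> tsmul sc t (tgen (sc s x) y - tgen (sc r y) x) \<in> tensor_rel sc star"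
      using tgen_swap_torsion[OF M' E \<phi>] nzd_mult[OF _ m\<^sub>0] by blast
  qed
qed

end
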